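(* Let $\mathcal{X}$ be a finite set, $P_X$ a probability distribution on $\mathcal{X}$ with $P_X(x)>0$ for all $x$, $X\sim P_X$, and let $\gamma>0$ and $\rho>0$. Let $\hat X_1,\hat X_2,\dots$ be i.i.d., independent of $X$, with law $$\hat P^*_\gamma(x)=\frac{P_X(x)^{\frac{1}{1+\gamma}}}{\sum_{x'\in\mathcal{X}}P_X(x')^{\frac{1}{1+\gamma}}}.$$ Let $G(X,\hat X_1^\infty)=\inf\{k\ge1:\hat X_k=X\}$ and $V_\rho(X,\hat X_1^\infty)=\binom{G(X,\hat X_1^\infty)+\rho-1}{\rho}$. Then $$\log\mathbb{E}\{V_\rho(X,\hat X_1^\infty)\}=\frac{\rho}{1+\gamma}H_{\frac{\gamma-\rho+1}{1+\gamma}}(X)+\frac{\gamma\rho}{1+\gamma}H_{\frac{1}{1+\gamma}}(X).$$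
   Context: $\binom{x}{y}=\frac{\Gamma(x+1)}{\Gamma(y+1)\Gamma(x-y+1)}$. Logarithms are natural. For real $\alpha\ne1$, $H_\alpha(X)=\frac{1}{1-\alpha}\log\sum_{x\in\mathcal{X}}P_X(x)^\alpha$. *)

theory Defs
  imports "HOL-Probability.Probability"
begin

definition gbinom :: "real \<Rightarrow> real \<Rightarrow> real" where
  "gbinom x y = Gamma (x + 1) / (Gamma (y + 1) * Gamma (x - y + 1))"

definition renyi_entropy :: "('b::finite \<Rightarrow> real) \<Rightarrow> real \<Rightarrow> real" where
  "renyi_entropy P \<alpha> = 1 / (1 - \<alpha>) * ln (\<Sum>x\<in>UNIV. P x powr \<alpha>)"

definition tilted :: "('b::finite \<Rightarrow> real) \<Rightarrow> real \<Rightarrow> 'b \<Rightarrow> real" where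
  "tilted P \<gamma> x = P x powr (1 / (1 + \<gamma>)) / (\<Sum>x'\<in>UNIV. P x' powr (1 / (1 + \<gamma>)))"

definition guess_time :: "'b \<Rightarrow> (nat \<Rightarrow> 'b) \<Rightarrow> enat" where
  "guess_time x xs = (INF k \<in> {k. 1 \<le> k \<and> xs k = x}. enat k)"

definition V_rho :: "real \<Rightarrow> 'b \<Rightarrow> (nat \<Rightarrow> 'b) \<Rightarrow> ennreal" where
  "V_rho \<rho> x xs = (case guess_time x xs of
      enat k \<Rightarrow> ennreal (gbinom (real k + \<rho> - 1) \<rho>)
    | \<infinity> \<Rightarrow> \<infinity>)"

end

theory Submission
  imports Defs
begin

(* Given X = x, the guesses hit x independently with probability q = tilted P gamma x each, so
   the number of guesses G is geometric: P(X = x, G = n + 1) = P x (1 - q)^n q, and G is finite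
   almost surely.  The negative binomial series sum_n binom(n + rho, rho) z^n = (1 - z)^-(rho + 1)
   then gives E[binom(G + rho - 1, rho) | X = x] = q^-rho.  Hence E V = sum_x P x q(x)^-rho, which
   for the tilted distribution factors as (sum_x P x^(1/(1+gamma)))^rho
   * sum_x P x^((gamma - rho + 1)/(1 + gamma)); its logarithm is the stated combination of Renyi
   entropies. *)

lemma gbinom_nonneg:
  assumes "\<rho> > -1"
  shows "gbinom (real n + \<rho>) \<rho> \<ge> 0"
  using assms unfolding gbinom_def by (simp add: less_imp_le)

lemma negative_binomial_series:
  fixes z \<rho> :: real
  assumes "\<bar>z\<bar> < 1" "\<rho> > -1"
  shows "(\<lambda>n. gbinom (real n + \<rho>) \<rho> * z ^ n) sums (1 - z) powr (-(\<rho> + 1))"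
proof -
  have not_pole: "\<rho> + 1 \<notin> \<int>\<^sub>\<le>\<^sub>0"
    using assms(2) by (auto elim!: nonpos_Ints_cases)
  have "(-(\<rho> + 1) gchoose n) * (-z) ^ n = gbinom (real n + \<rho>) \<rho> * z ^ n" for n
  proof -
    have "(-(\<rho> + 1) gchoose n) * (-z) ^ n
        = ((-1) ^ n * (-1) ^ n) * pochhammer (\<rho> + 1) n / fact n * z ^ n"
      by (simp add: gbinomial_pochhammer power_minus[of z] add.commute)
    also have "(-1 :: real) ^ n * (-1) ^ n = 1"
      by (simp flip: power_add)
    also have "pochhammer (\<rho> + 1) n = Gamma (real n + \<rho> + 1) / Gamma (\<rho> + 1)"
      using pochhammer_Gamma[OF not_pole] by (simp add: add_ac)
    also have "(fact n :: real) = Gamma (real n + 1)"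
      using Gamma_fact[of n, where 'a = real] by (simp add: add.commute)
    finally show ?thesis
      unfolding gbinom_def by simp
  qed
  moreover have "(\<lambda>n. (-(\<rho> + 1) gchoose n) * (-z) ^ n) sums (1 - z) powr (-(\<rho> + 1))"
    using gen_binomial_real[of "-z"] assms(1) by simp
  ultimately show ?thesis by simp
qed

lemma sums_gbinom_geometric:
  fixes q \<rho> :: real
  assumes "0 < q" "q < 2" "\<rho> > -1"
  shows "(\<lambda>n. gbinom (real n + \<rho>) \<rho> * ((1 - q) ^ n * q)) sums q powr (-\<rho>)"
proof -
  have "(\<lambda>n. gbinom (real n + \<rho>) \<rho> * (1 - q) ^ n) sums q powr (-(\<rho> + 1))"
    using negative_binomial_series[of "1 - q" \<rho>] assms by simp
  then have "(\<lambda>n. gbinom (real n + \<rho>) \<rho> * (1 - q) ^ n * q) sums (q powr (-(\<rho> + 1)) * q)"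
    by (rule sums_mult2)
  moreover have "q powr (-(\<rho> + 1)) * q = q powr (-\<rho>)"
  proof -
    have "q powr (-(\<rho> + 1)) * q = q powr (-(\<rho> + 1)) * q powr 1"
      using assms(1) by simp
    also have "\<dots> = q powr (-\<rho>)"
      by (simp only: powr_add[symmetric]) simp
    finally show ?thesis .
  qed
  ultimately show ?thesis
    by (simp add: mult.assoc)
qed

lemma guess_time_eq_infinity_iff: "guess_time x xs = \<infinity> \<longleftrightarrow> (\<forall>k. xs (Suc k) \<noteq> x)"
proof -
  have "guess_time x xs = \<infinity> \<longleftrightarrow> {k. 1 \<le> k \<and> xs k = x} = {}"
    unfolding guess_time_def top_enat_def[symmetric] INF_top_conv(1) by (simp add: top_enat_def)
  also have "\<dots> \<longleftrightarrow> (\<forall>k. xs (Suc k) \<noteq> x)"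
    by (auto dest: Suc_le_D)
  finally show ?thesis .
qed

lemma guess_time_eq_enat_SucI:
  assumes "xs (Suc n) = x" "\<forall>k<n. xs (Suc k) \<noteq> x"
  shows "guess_time x xs = enat (Suc n)"
  unfolding guess_time_def
proof (rule antisym)
  show "(INF k \<in> {k. 1 \<le> k \<and> xs k = x}. enat k) \<le> enat (Suc n)"
    using assms(1) by (intro INF_lower) auto
  show "enat (Suc n) \<le> (INF k \<in> {k. 1 \<le> k \<and> xs k = x}. enat k)"
  proof (rule INF_greatest)
    fix k assume "k \<in> {k. 1 \<le> k \<and> xs k = x}"
    with assms(2) show "enat (Suc n) \<le> enat k"
      by (cases k) (auto simp: not_less[symmetric])
  qed
qed

lemma guess_time_cases:
  obtains "guess_time x xs = \<infinity>"
  | n where "guess_time x xs = enat (Suc n)" "xs (Suc n) = x" "\<forall>k<n. xs (Suc k) \<noteq> x"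
proof (cases "\<exists>k. xs (Suc k) = x")
  case True
  let ?n = "LEAST k. xs (Suc k) = x"
  have hit: "xs (Suc ?n) = x"
    using LeastI_ex[OF True] .
  have miss: "\<forall>k<?n. xs (Suc k) \<noteq> x"
    using not_less_Least[of _ "\<lambda>k. xs (Suc k) = x"] by blast
  show ?thesis
    using that(2)[OF guess_time_eq_enat_SucI[OF hit miss] hit miss] .
next
  case False
  then show ?thesis
    by (intro that(1)) (simp add: guess_time_eq_infinity_iff)
qed

lemma guess_time_eq_enat_Suc_iff:
  "guess_time x xs = enat (Suc n) \<longleftrightarrow> xs (Suc n) = x \<and> (\<forall>k<n. xs (Suc k) \<noteq> x)"
proof
  assume "guess_time x xs = enat (Suc n)"
  then show "xs (Suc n) = x \<and> (\<forall>k<n. xs (Suc k) \<noteq> x)"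
    by (cases x xs rule: guess_time_cases) auto
qed (simp add: guess_time_eq_enat_SucI)

lemma renyi_entropy_eq:
  assumes "\<alpha> \<noteq> 1"
  shows "(1 - \<alpha>) * renyi_entropy P \<alpha> = ln (\<Sum>x\<in>UNIV. P x powr \<alpha>)"
  using assms by (simp add: renyi_entropy_def)

lemma sum_powr_pos:
  fixes P :: "'b::finite \<Rightarrow> real"
  assumes "\<And>x. P x > 0"
  shows "(\<Sum>x\<in>UNIV. P x powr a) > 0"
proof -
  have "P x powr a > 0" for x
    using assms[of x] by simp
  then show ?thesis
    by (intro sum_pos) auto
qed

lemma tilted_pos:
  assumes "\<And>x. P x > 0"
  shows "tilted P \<gamma> x > 0"
  unfolding tilted_def using assms[of x] sum_powr_pos[of P, OF assms]
  by (simp add: divide_pos_pos)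

lemma sum_mult_tilted_powr:
  fixes P :: "'b::finite \<Rightarrow> real"
  assumes "\<And>x. P x > 0" "1 + \<gamma> \<noteq> 0"
  shows "(\<Sum>x\<in>UNIV. P x * tilted P \<gamma> x powr (-\<rho>))
    = (\<Sum>x\<in>UNIV. P x powr (1 / (1 + \<gamma>))) powr \<rho>
      * (\<Sum>x\<in>UNIV. P x powr ((\<gamma> - \<rho> + 1) / (1 + \<gamma>)))"
proof -
  define S where "S = (\<Sum>x\<in>UNIV. P x powr (1 / (1 + \<gamma>)))"
  have "S > 0"
    unfolding S_def using sum_powr_pos[of P, OF assms(1)] .
  have "P x * tilted P \<gamma> x powr (-\<rho>) = S powr \<rho> * P x powr ((\<gamma> - \<rho> + 1) / (1 + \<gamma>))"
    for x
  proof -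
    have "tilted P \<gamma> x powr (-\<rho>) = P x powr (- \<rho> / (1 + \<gamma>)) * S powr \<rho>"
      using assms(1)[of x] \<open>S > 0\<close>
      by (simp add: tilted_def S_def powr_divide powr_powr powr_minus divide_simps)
    moreover have "P x * P x powr (- \<rho> / (1 + \<gamma>)) = P x powr ((\<gamma> - \<rho> + 1) / (1 + \<gamma>))"
    proof -
      have "P x powr ((\<gamma> - \<rho> + 1) / (1 + \<gamma>)) = P x powr (1 + - \<rho> / (1 + \<gamma>))"
        using assms(2) by (simp add: field_simps)
      also have "\<dots> = P x powr 1 * P x powr (- \<rho> / (1 + \<gamma>))"
        by (rule powr_add)
      finally show ?thesis
        using assms(1)[of x] by simp
    qed
    ultimately show ?thesis
      by (simp add: mult_ac)
  qed
  then show ?thesis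
    unfolding S_def by (simp add: sum_distrib_left)
qed

lemma ln_sum_mult_tilted_powr:
  fixes P :: "'b::finite \<Rightarrow> real"
  assumes "\<And>x. P x > 0" "1 + \<gamma> \<noteq> 0" "\<gamma> \<noteq> 0" "\<rho> \<noteq> 0"
  shows "ln (\<Sum>x\<in>UNIV. P x * tilted P \<gamma> x powr (-\<rho>))
    = \<rho> / (1 + \<gamma>) * renyi_entropy P ((\<gamma> - \<rho> + 1) / (1 + \<gamma>))
      + \<gamma> * \<rho> / (1 + \<gamma>) * renyi_entropy P (1 / (1 + \<gamma>))"
proof -
  have "\<rho> / (1 + \<gamma>) * renyi_entropy P ((\<gamma> - \<rho> + 1) / (1 + \<gamma>))
      = ln (\<Sum>x\<in>UNIV. P x powr ((\<gamma> - \<rho> + 1) / (1 + \<gamma>)))"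
  proof -
    have "1 - (\<gamma> - \<rho> + 1) / (1 + \<gamma>) = \<rho> / (1 + \<gamma>)"
      using assms(2) by (simp add: field_simps)
    then show ?thesis
      using renyi_entropy_eq[of "(\<gamma> - \<rho> + 1) / (1 + \<gamma>)" P] assms(4) by auto
  qed
  moreover have "\<gamma> * \<rho> / (1 + \<gamma>) * renyi_entropy P (1 / (1 + \<gamma>))
      = \<rho> * ln (\<Sum>x\<in>UNIV. P x powr (1 / (1 + \<gamma>)))"
  proof -
    have "1 - 1 / (1 + \<gamma>) = \<gamma> / (1 + \<gamma>)" "1 / (1 + \<gamma>) \<noteq> 1"
      using assms(2,3) by (simp_all add: field_simps)
    then have "\<gamma> / (1 + \<gamma>) * renyi_entropy P (1 / (1 + \<gamma>))
        = ln (\<Sum>x\<in>UNIV. P x powr (1 / (1 + \<gamma>)))"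
      using renyi_entropy_eq[of "1 / (1 + \<gamma>)" P] by simp
    moreover have "\<gamma> * \<rho> / (1 + \<gamma>) = \<rho> * (\<gamma> / (1 + \<gamma>))"
      by simp
    ultimately show ?thesis
      by (simp only: mult.assoc)
  qed
  moreover have "(\<Sum>x\<in>UNIV. P x powr a) \<noteq> 0" for a
    using sum_powr_pos[of P a, OF assms(1)] by simp
  ultimately show ?thesis
    using sum_powr_pos[of P, OF assms(1)]
    by (simp add: sum_mult_tilted_powr[OF assms(1,2)] ln_mult ln_powr)
qed

lemma (in prob_space) prob_indep_vars_Ball:
  assumes "indep_vars (\<lambda>_. count_space UNIV) Y J" "finite I" "I \<subseteq> J"
  shows "prob {\<omega> \<in> space M. \<forall>i\<in>I. Y i \<omega> \<in> A i}
    = (\<Prod>i\<in>I. prob {\<omega> \<in> space M. Y i \<omega> \<in> A i})"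
proof (cases "I = {}")
  case False
  have "{\<omega> \<in> space M. \<forall>i\<in>I. Y i \<omega> \<in> A i} = (\<Inter>i\<in>I. Y i -` A i \<inter> space M)"
    using False by auto
  with indep_varsD[OF assms(1) False assms(2,3)] show ?thesis
    by (simp add: vimage_def Int_def conj_commute)
qed (simp add: prob_space)

(* Index 0 of the independent family is the secret X; the guesses are Xh 1, Xh 2, ...,
   and Xh 0 plays no role. *)
locale guessing = prob_space M for M :: "'a measure" +
  fixes P Q :: "'b::finite \<Rightarrow> real" and X :: "'a \<Rightarrow> 'b" and Xh :: "nat \<Rightarrow> 'a \<Rightarrow> 'b"
  assumes indep: "indep_vars (\<lambda>_. count_space UNIV) (\<lambda>i. if i = 0 then X else Xh i) UNIV"
    and distX: "\<And>x. prob {\<omega> \<in> space M. X \<omega> = x} = P x"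
    and distXh: "\<And>k x. k \<ge> 1 \<Longrightarrow> prob {\<omega> \<in> space M. Xh k \<omega> = x} = Q x"
begin

abbreviation guesses :: "'a \<Rightarrow> enat" where
  "guesses \<omega> \<equiv> guess_time (X \<omega>) (\<lambda>k. Xh k \<omega>)"

lemma measurable_trial: "(if i = 0 then X else Xh i) \<in> measurable M (count_space UNIV)"
  using indep unfolding indep_vars_def2 by auto

lemma measurable_X [measurable]: "X \<in> measurable M (count_space UNIV)"
  using measurable_trial[of 0] by simp

lemma measurable_Xh_Suc [measurable]: "Xh (Suc k) \<in> measurable M (count_space UNIV)"
  using measurable_trial[of "Suc k"] by simp

lemma Q_le_1: "Q x \<le> 1"
  using distXh[of 1 x] prob_le_1 by (metis order_refl)

lemma prob_Xh_neq: "prob {\<omega> \<in> space M. Xh (Suc k) \<omega> \<noteq> x} = 1 - Q x"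
proof -
  have "{\<omega> \<in> space M. Xh (Suc k) \<omega> \<noteq> x} = space M - {\<omega> \<in> space M. Xh (Suc k) \<omega> = x}"
    by auto
  then show ?thesis
    using distXh[of "Suc k" x] by (simp add: prob_compl)
qed

lemma prob_first_guesses_miss:
  "prob {\<omega> \<in> space M. X \<omega> = x \<and> (\<forall>k<n. Xh (Suc k) \<omega> \<noteq> x)} = P x * (1 - Q x) ^ n"
proof -
  let ?A = "\<lambda>i. if i = 0 then {x} else -{x}"
  have "prob {\<omega> \<in> space M. X \<omega> = x \<and> (\<forall>k<n. Xh (Suc k) \<omega> \<noteq> x)}
      = prob {\<omega> \<in> space M. \<forall>i\<in>{..<Suc n}. (if i = 0 then X else Xh i) \<omega> \<in> ?A i}"
    unfolding lessThan_iff Ball_def All_less_Suc2 by simp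
  also have "\<dots> = (\<Prod>i<Suc n. prob {\<omega> \<in> space M. (if i = 0 then X else Xh i) \<omega> \<in> ?A i})"
    by (rule prob_indep_vars_Ball[OF indep]) auto
  also have "\<dots> = P x * (1 - Q x) ^ n"
    by (subst prod.lessThan_Suc_shift) (simp add: distX prob_Xh_neq)
  finally show ?thesis .
qed

lemma prob_guesses_eq_Suc:
  "prob {\<omega> \<in> space M. X \<omega> = x \<and> guesses \<omega> = enat (Suc n)} = P x * (1 - Q x) ^ n * Q x"
proof -
  define B where "B n = {\<omega> \<in> space M. X \<omega> = x \<and> (\<forall>k<n. Xh (Suc k) \<omega> \<noteq> x)}" for n
  have "{\<omega> \<in> space M. X \<omega> = x \<and> guesses \<omega> = enat (Suc n)} = B n - B (Suc n)"
    unfolding B_def less_Suc_eq by (auto simp: guess_time_eq_enat_Suc_iff)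
  moreover have "B (Suc n) \<subseteq> B n"
    unfolding B_def by auto
  moreover have "B m \<in> events" for m
    unfolding B_def by measurable
  ultimately have "prob {\<omega> \<in> space M. X \<omega> = x \<and> guesses \<omega> = enat (Suc n)}
      = prob (B n) - prob (B (Suc n))"
    by (simp add: finite_measure_Diff)
  also have "\<dots> = P x * (1 - Q x) ^ n - P x * (1 - Q x) ^ Suc n"
    unfolding B_def prob_first_guesses_miss ..
  also have "\<dots> = P x * (1 - Q x) ^ n * Q x"
    unfolding power_Suc by algebra
  finally show ?thesis .
qed

lemma AE_guesses_finite:
  assumes "\<And>x. Q x > 0"
  shows "AE \<omega> in M. guesses \<omega> \<noteq> \<infinity>"
proof -
  define N where "N = {\<omega> \<in> space M. \<forall>k. Xh (Suc k) \<omega> \<noteq> X \<omega>}"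
  have N_events: "N \<in> events"
    unfolding N_def by measurable
  have "prob N \<le> (\<Sum>x\<in>UNIV. P x * (1 - Q x) ^ n)" for n
  proof -
    have "N \<subseteq> (\<Union>x. {\<omega> \<in> space M. X \<omega> = x \<and> (\<forall>k<n. Xh (Suc k) \<omega> \<noteq> x)})"
      unfolding N_def by auto
    then have "prob N \<le> prob (\<Union>x. {\<omega> \<in> space M. X \<omega> = x \<and> (\<forall>k<n. Xh (Suc k) \<omega> \<noteq> x)})"
      by (rule finite_measure_mono) measurable
    also have "\<dots> \<le> (\<Sum>x\<in>UNIV. prob {\<omega> \<in> space M. X \<omega> = x \<and> (\<forall>k<n. Xh (Suc k) \<omega> \<noteq> x)})"
      by (rule measure_UNION_le) measurable
    finally show ?thesis
      by (simp add: prob_first_guesses_miss)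
  qed
  moreover have "(\<lambda>n. \<Sum>x\<in>UNIV. P x * (1 - Q x) ^ n) \<longlonglongrightarrow> (\<Sum>x\<in>UNIV. P x * 0)"
  proof (intro tendsto_sum tendsto_mult tendsto_const LIMSEQ_power_zero)
    show "norm (1 - Q x) < 1" for x
      using assms[of x] Q_le_1[of x] by simp
  qed
  ultimately have "prob N \<le> 0"
    using LIMSEQ_le_const[of _ 0 "prob N"] by fastforce
  then have "N \<in> null_sets M"
    using N_events measure_nonneg[of M N] by (auto simp: emeasure_eq_measure)
  then have "AE \<omega> in M. \<omega> \<notin> N"
    by (rule AE_not_in)
  with AE_space show ?thesis
    by eventually_elim (auto simp: N_def guess_time_eq_infinity_iff)
qed

lemma nn_integral_guesses:
  assumes "\<And>x. Q x > 0"
  shows "(\<integral>\<^sup>+\<omega>. f (guesses \<omega>) \<partial>M)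
    = (\<Sum>n. \<Sum>x\<in>UNIV. f (enat (Suc n)) * ennreal (P x * (1 - Q x) ^ n * Q x))"
proof -
  define E where "E x n = {\<omega> \<in> space M. X \<omega> = x \<and> guesses \<omega> = enat (Suc n)}" for x n
  have E_events [measurable]: "E x n \<in> events" for x n
    unfolding E_def guess_time_eq_enat_Suc_iff by measurable
  have "AE \<omega> in M. f (guesses \<omega>) = (\<Sum>n. \<Sum>x\<in>UNIV. f (enat (Suc n)) * indicator (E x n) \<omega>)"
    using AE_guesses_finite[OF assms] AE_space
  proof eventually_elim
    case (elim \<omega>)
    then obtain m where m: "guesses \<omega> = enat (Suc m)"
      by (cases "X \<omega>" "\<lambda>k. Xh k \<omega>" rule: guess_time_cases) auto
    have E_indicator: "f (enat (Suc n)) * indicator (E x n) \<omega>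
        = (if x = X \<omega> \<and> n = m then f (guesses \<omega>) else 0)" for x n
      using elim by (auto simp: E_def m)
    have "(\<Sum>x\<in>UNIV. f (enat (Suc n)) * indicator (E x n) \<omega>)
        = (if n = m then f (guesses \<omega>) else 0)" for n
      unfolding E_indicator by (cases "n = m") simp_all
    then show ?case
      using sums_unique[OF sums_single[of m "\<lambda>_. f (guesses \<omega>)"]] by simp
  qed
  then have "(\<integral>\<^sup>+\<omega>. f (guesses \<omega>) \<partial>M)
      = (\<integral>\<^sup>+\<omega>. (\<Sum>n. \<Sum>x\<in>UNIV. f (enat (Suc n)) * indicator (E x n) \<omega>) \<partial>M)"
    by (rule nn_integral_cong_AE)
  also have "\<dots> = (\<Sum>n. \<integral>\<^sup>+\<omega>. (\<Sum>x\<in>UNIV. f (enat (Suc n)) * indicator (E x n) \<omega>) \<partial>M)"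
    by (rule nn_integral_suminf) measurable
  also have "\<dots> = (\<Sum>n. \<Sum>x\<in>UNIV. \<integral>\<^sup>+\<omega>. f (enat (Suc n)) * indicator (E x n) \<omega> \<partial>M)"
    by (rule suminf_cong, rule nn_integral_sum) measurable
  also have "\<dots> = (\<Sum>n. \<Sum>x\<in>UNIV. f (enat (Suc n)) * emeasure M (E x n))"
    by (simp only: nn_integral_cmult_indicator E_events)
  also have "\<dots> = (\<Sum>n. \<Sum>x\<in>UNIV. f (enat (Suc n)) * ennreal (P x * (1 - Q x) ^ n * Q x))"
    by (simp add: emeasure_eq_measure E_def prob_guesses_eq_Suc)
  finally show ?thesis .
qed

lemma P_nonneg: "P x \<ge> 0"
  using distX[of x] measure_nonneg by metis

lemma nn_integral_V_rho:
  assumes "\<And>x. Q x > 0" "\<rho> > -1"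
  shows "(\<integral>\<^sup>+\<omega>. V_rho \<rho> (X \<omega>) (\<lambda>k. Xh k \<omega>) \<partial>M)
    = ennreal (\<Sum>x\<in>UNIV. P x * Q x powr (-\<rho>))"
proof -
  define t where
    "t n = (\<Sum>x\<in>UNIV. gbinom (real n + \<rho>) \<rho> * (P x * (1 - Q x) ^ n * Q x))" for n
  have t_nonneg: "t n \<ge> 0" for n
    unfolding t_def using assms Q_le_1 P_nonneg
    by (intro sum_nonneg mult_nonneg_nonneg gbinom_nonneg) (auto simp: less_imp_le)
  have "t sums (\<Sum>x\<in>UNIV. P x * Q x powr (-\<rho>))"
    unfolding t_def
  proof (rule sums_sum)
    fix x
    have "Q x < 2"
      using Q_le_1[of x] by simp
    then have "(\<lambda>n. P x * (gbinom (real n + \<rho>) \<rho> * ((1 - Q x) ^ n * Q x)))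
        sums (P x * Q x powr (-\<rho>))"
      using assms by (intro sums_mult sums_gbinom_geometric) auto
    then show "(\<lambda>n. gbinom (real n + \<rho>) \<rho> * (P x * (1 - Q x) ^ n * Q x))
        sums (P x * Q x powr (-\<rho>))"
      by (simp add: mult_ac)
  qed
  then have "(\<Sum>n. ennreal (t n)) = ennreal (\<Sum>x\<in>UNIV. P x * Q x powr (-\<rho>))"
    using t_nonneg suminf_ennreal2[of t] sums_summable sums_unique by metis
  moreover have "(\<integral>\<^sup>+\<omega>. V_rho \<rho> (X \<omega>) (\<lambda>k. Xh k \<omega>) \<partial>M) = (\<Sum>n. ennreal (t n))"
  proof -
    have "0 \<le> P x * (1 - Q x) ^ n * Q x" for x n
      using assms(1)[of x] Q_le_1[of x] P_nonneg[of x] by simp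
    then have "ennreal (t n) = (\<Sum>x\<in>UNIV. ennreal (gbinom (real (Suc n) + \<rho> - 1) \<rho>)
        * ennreal (P x * (1 - Q x) ^ n * Q x))" for n
      unfolding t_def using gbinom_nonneg[OF assms(2)]
      by (simp add: add_ac ennreal_mult flip: sum_ennreal)
    then show ?thesis
      unfolding V_rho_def using nn_integral_guesses[OF assms(1)] by simp
  qed
  ultimately show ?thesis
    by simp
qed

end

theorem corollary2:
  fixes M :: "'a measure"
    and P :: "'b::finite \<Rightarrow> real"
    and X :: "'a \<Rightarrow> 'b"
    and Xh :: "nat \<Rightarrow> 'a \<Rightarrow> 'b"
    and \<gamma> \<rho> :: real
  assumes "prob_space M"
    and P_pos: "\<And>x. P x > 0"
    and P_sum: "(\<Sum>x\<in>UNIV. P x) = 1"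
    and "\<gamma> > 0" and "\<rho> > 0"
    and indep: "prob_space.indep_vars M (\<lambda>_. count_space UNIV)
                  (\<lambda>i. if i = 0 then X else Xh i) UNIV"
    and distX: "\<And>x. measure M {\<omega> \<in> space M. X \<omega> = x} = P x"
    and distXh: "\<And>k x. k \<ge> 1 \<Longrightarrow>
                   measure M {\<omega> \<in> space M. Xh k \<omega> = x} = tilted P \<gamma> x"
  shows "(\<integral>\<^sup>+ \<omega>. V_rho \<rho> (X \<omega>) (\<lambda>k. Xh k \<omega>) \<partial>M) < \<infinity> \<and>
         ln (enn2real (\<integral>\<^sup>+ \<omega>. V_rho \<rho> (X \<omega>) (\<lambda>k. Xh k \<omega>) \<partial>M))
           = \<rho> / (1 + \<gamma>) * renyi_entropy P ((\<gamma> - \<rho> + 1) / (1 + \<gamma>))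
             + \<gamma> * \<rho> / (1 + \<gamma>) * renyi_entropy P (1 / (1 + \<gamma>))"
proof -
  have "guessing M P (tilted P \<gamma>) X Xh"
    using assms(1) indep distX distXh by (simp add: guessing_def guessing_axioms_def)
  then interpret guessing M P "tilted P \<gamma>" X Xh .
  define L where "L = (\<Sum>x\<in>UNIV. P x * tilted P \<gamma> x powr (-\<rho>))"
  have "P x * tilted P \<gamma> x powr (-\<rho>) > 0" for x
    using P_pos[of x] tilted_pos[of P, OF P_pos, of \<gamma> x] by simp
  then have "L > 0"
    unfolding L_def by (intro sum_pos) auto
  moreover have "(\<integral>\<^sup>+ \<omega>. V_rho \<rho> (X \<omega>) (\<lambda>k. Xh k \<omega>) \<partial>M) = ennreal L"
    unfolding L_def using nn_integral_V_rho tilted_pos[of P, OF P_pos] \<open>\<rho> > 0\<close> by simp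
  moreover have "ln L = \<rho> / (1 + \<gamma>) * renyi_entropy P ((\<gamma> - \<rho> + 1) / (1 + \<gamma>))
      + \<gamma> * \<rho> / (1 + \<gamma>) * renyi_entropy P (1 / (1 + \<gamma>))"
    unfolding L_def using ln_sum_mult_tilted_powr[of P, OF P_pos] \<open>\<gamma> > 0\<close> \<open>\<rho> > 0\<close> by simp
  ultimately show ?thesis
    by simp
qed

end
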